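(* Fix a parameter space with metric $d$, a data space $X$, an update rule $g$, initial parameters $\mathbf{w}_0$, $\epsilon>0$, a set of parameters $W$ and a dataset $D'$. Suppose that for all $\mathbf{w}\in W$ and $\mathbf{x}\in X$ there exists $\mathbf{x}_i\in D'$ with $d(g(\mathbf{w},\mathbf{x}),g(\mathbf{w},\mathbf{x}_i))\le\epsilon$. Then for every dataset $D\subseteq X$ with $H_{D,g,d,0}(\mathbf{w})\subseteq W$, $D'$ forges $D$ with $\epsilon$.
   Context: A valid $(g,d,\epsilon)$ log is a sequence $\{(\mathbf{w}_i,\mathbf{x}_i)\}_{i\in J}$ ($J$ a countable index set, consecutive indices) such that $d(\mathbf{w}_{i+1}, g(\mathbf{w}_i,\mathbf{x}_i))\le \epsilon$ for all $i\in J$. For a dataset $D$, $H_{D,g,d,\epsilon}$ is the set of all valid $(g,d,\epsilon)$ logs starting from $\mathbf{w}_0$ whose data points lie in $D$, and $H_{D,g,d,0}(\mathbf{w})$ is the set of all parameters appearing in logs of $H_{D,g,d,0}$. $D'$ forges $D$ with $\epsilon$ if there is a map $B: H_{D,g,d,0}\to H_{D',g,d,\epsilon}$ with $B(\{(\mathbf{w}_i,\mathbf{x}_i)\}_{i\in J})=\{(\mathbf{w}_i,\tilde{\mathbf{x}}_i)\}_{i\in J}$, $\tilde{\mathbf{x}}_i\in D'$, whose output is a valid $(g,d,\epsilon)$ log. *)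

theory Defs
  imports Main "HOL-Library.Extended_Nat"
begin

text \<open>A log is a pair (N, L): the index set is J = {i. i < N} (N :: enat, so J is
  any countable set of consecutive indices starting at 0, finite or infinite), and
  L i = (w_i, x_i) for i in J.\<close>

type_synonym ('w,'x) log = "enat \<times> (nat \<Rightarrow> 'w \<times> 'x)"

definition log_idx :: "('w,'x) log \<Rightarrow> nat set" where
  "log_idx l = {i. enat i < fst l}"

definition is_metric :: "('w \<Rightarrow> 'w \<Rightarrow> real) \<Rightarrow> bool" where
  "is_metric d \<longleftrightarrow> (\<forall>x y. d x y \<ge> 0) \<and> (\<forall>x y. d x y = 0 \<longleftrightarrow> x = y)
     \<and> (\<forall>x y. d x y = d y x) \<and> (\<forall>x y z. d x z \<le> d x y + d y z)"

definition valid_log ::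
  "('w \<Rightarrow> 'x \<Rightarrow> 'w) \<Rightarrow> ('w \<Rightarrow> 'w \<Rightarrow> real) \<Rightarrow> real \<Rightarrow> ('w,'x) log \<Rightarrow> bool" where
  "valid_log g d eps l \<longleftrightarrow>
     (\<forall>i. Suc i \<in> log_idx l \<longrightarrow>
        d (fst (snd l (Suc i))) (g (fst (snd l i)) (snd (snd l i))) \<le> eps)"

definition H ::
  "'w \<Rightarrow> 'x set \<Rightarrow> ('w \<Rightarrow> 'x \<Rightarrow> 'w) \<Rightarrow> ('w \<Rightarrow> 'w \<Rightarrow> real) \<Rightarrow> real \<Rightarrow> ('w,'x) log set" where
  "H w0 D g d eps = {l. valid_log g d eps l
      \<and> (0 \<in> log_idx l \<longrightarrow> fst (snd l 0) = w0)
      \<and> (\<forall>i\<in>log_idx l. snd (snd l i) \<in> D)}"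

definition H_params ::
  "'w \<Rightarrow> 'x set \<Rightarrow> ('w \<Rightarrow> 'x \<Rightarrow> 'w) \<Rightarrow> ('w \<Rightarrow> 'w \<Rightarrow> real) \<Rightarrow> real \<Rightarrow> 'w set" where
  "H_params w0 D g d eps = {fst (snd l i) | l i. l \<in> H w0 D g d eps \<and> i \<in> log_idx l}"

definition forges ::
  "'w \<Rightarrow> ('w \<Rightarrow> 'x \<Rightarrow> 'w) \<Rightarrow> ('w \<Rightarrow> 'w \<Rightarrow> real) \<Rightarrow> 'x set \<Rightarrow> 'x set \<Rightarrow> real \<Rightarrow> bool" where
  "forges w0 g d D' D eps \<longleftrightarrow>
     (\<exists>B :: ('w,'x) log \<Rightarrow> ('w,'x) log.
        \<forall>l \<in> H w0 D g d 0.
          B l \<in> H w0 D' g d eps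
          \<and> fst (B l) = fst l
          \<and> (\<forall>i \<in> log_idx l. fst (snd (B l) i) = fst (snd l i) \<and> snd (snd (B l) i) \<in> D'))"

end

theory Submission
  imports Defs
begin

text \<open>Keep every parameter of an exact log and replace each data point x_i by a point of D'
  whose update from w_i lands within eps of the true update. By the triangle inequality the
  relabelled log is still valid, with tolerance eps instead of 0.\<close>

definition relabel_log :: "('w \<Rightarrow> 'x \<Rightarrow> 'x) \<Rightarrow> ('w,'x) log \<Rightarrow> ('w,'x) log" where
  "relabel_log c l = (fst l, \<lambda>i. (fst (snd l i), c (fst (snd l i)) (snd (snd l i))))"

lemma relabel_log_simps [simp]:
  "fst (relabel_log c l) = fst l"
  "snd (relabel_log c l) i = (fst (snd l i), c (fst (snd l i)) (snd (snd l i)))"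
  "log_idx (relabel_log c l) = log_idx l"
  by (simp_all add: log_idx_def relabel_log_def)

lemma Suc_log_idxD: "Suc i \<in> log_idx l \<Longrightarrow> i \<in> log_idx l"
  unfolding log_idx_def by (auto intro: order.strict_trans1[rotated])

lemma valid_log_relabel_log:
  assumes "is_metric d"
    and "valid_log g d delta l"
    and "\<And>i. i \<in> log_idx l \<Longrightarrow>
           d (g (fst (snd l i)) (snd (snd l i))) (g (fst (snd l i)) (c (fst (snd l i)) (snd (snd l i)))) \<le> eps"
  shows "valid_log g d (delta + eps) (relabel_log c l)"
  unfolding valid_log_def relabel_log_simps(3)
proof (intro allI impI)
  fix i assume "Suc i \<in> log_idx l"
  let ?w = "fst (snd l i)" and ?x = "snd (snd l i)" and ?w' = "fst (snd l (Suc i))"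
  have "d ?w' (g ?w (c ?w ?x)) \<le> d ?w' (g ?w ?x) + d (g ?w ?x) (g ?w (c ?w ?x))"
    using assms(1) unfolding is_metric_def by blast
  also have "\<dots> \<le> delta + eps"
    using assms(2,3) \<open>Suc i \<in> log_idx l\<close> Suc_log_idxD unfolding valid_log_def
    by (meson add_mono)
  finally show "d (fst (snd (relabel_log c l) (Suc i)))
      (g (fst (snd (relabel_log c l) i)) (snd (snd (relabel_log c l) i))) \<le> delta + eps"
    by simp
qed

lemma relabel_log_in_H:
  assumes "is_metric d"
    and "l \<in> H w0 D g d delta"
    and "\<And>i. i \<in> log_idx l \<Longrightarrow> c (fst (snd l i)) (snd (snd l i)) \<in> D' \<and>
           d (g (fst (snd l i)) (snd (snd l i))) (g (fst (snd l i)) (c (fst (snd l i)) (snd (snd l i)))) \<le> eps"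
  shows "relabel_log c l \<in> H w0 D' g d (delta + eps)"
proof -
  have "valid_log g d (delta + eps) (relabel_log c l)"
    using valid_log_relabel_log[OF assms(1)] assms(2,3) unfolding H_def by blast
  then show ?thesis
    using assms(2,3) unfolding H_def by simp
qed

lemma param_in_H_params:
  "l \<in> H w0 D g d eps \<Longrightarrow> i \<in> log_idx l \<Longrightarrow> fst (snd l i) \<in> H_params w0 D g d eps"
  unfolding H_params_def by blast

lemma data_in_H: "l \<in> H w0 D g d eps \<Longrightarrow> i \<in> log_idx l \<Longrightarrow> snd (snd l i) \<in> D"
  unfolding H_def by blast

lemma forgesI_approx_updates:
  assumes "is_metric d"
    and approx: "\<forall>w\<in>H_params w0 D g d 0. \<forall>x\<in>D. \<exists>xi\<in>D'. d (g w x) (g w xi) \<le> eps"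
  shows "forges w0 g d D' D eps"
proof -
  define c where "c w x = (SOME xi. xi \<in> D' \<and> d (g w x) (g w xi) \<le> eps)" for w x
  have c: "c w x \<in> D' \<and> d (g w x) (g w (c w x)) \<le> eps"
    if "w \<in> H_params w0 D g d 0" "x \<in> D" for w x
    unfolding c_def by (rule someI_ex) (use approx that in blast)
  have "relabel_log c l \<in> H w0 D' g d eps \<and> fst (relabel_log c l) = fst l \<and>
      (\<forall>i \<in> log_idx l. fst (snd (relabel_log c l) i) = fst (snd l i)
                       \<and> snd (snd (relabel_log c l) i) \<in> D')"
    if l: "l \<in> H w0 D g d 0" for l
  proof -
    have "\<And>i. i \<in> log_idx l \<Longrightarrow> c (fst (snd l i)) (snd (snd l i)) \<in> D' \<and>
           d (g (fst (snd l i)) (snd (snd l i))) (g (fst (snd l i)) (c (fst (snd l i)) (snd (snd l i)))) \<le> eps"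
      using c param_in_H_params[OF l] data_in_H[OF l] by blast
    with relabel_log_in_H[OF assms(1) l] show ?thesis
      by simp
  qed
  then show ?thesis
    unfolding forges_def by blast
qed

theorem lemma4:
  fixes d :: "'w \<Rightarrow> 'w \<Rightarrow> real" and X :: "'x set" and g :: "'w \<Rightarrow> 'x \<Rightarrow> 'w"
    and w0 :: 'w and eps :: real and W :: "'w set" and D' :: "'x set"
  assumes "is_metric d"
    and "eps > 0"
    and "\<forall>w\<in>W. \<forall>x\<in>X. \<exists>xi\<in>D'. d (g w x) (g w xi) \<le> eps"
  shows "\<forall>D. D \<subseteq> X \<and> H_params w0 D g d 0 \<subseteq> W \<longrightarrow> forges w0 g d D' D eps"
proof (intro allI impI)
  fix D assume "D \<subseteq> X \<and> H_params w0 D g d 0 \<subseteq> W"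
  with assms(3) have "\<forall>w\<in>H_params w0 D g d 0. \<forall>x\<in>D. \<exists>xi\<in>D'. d (g w x) (g w xi) \<le> eps"
    by blast
  then show "forges w0 g d D' D eps"
    using forgesI_approx_updates[OF assms(1)] by blast
qed

end
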